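(* For every integer $n\ge 2$ there exists a weighted undirected graph $G$ on $n$ vertices with $\mathrm{cdim}(G)=2n-3$.
   Context: A weighted undirected graph $G=(V,w)$ consists of a finite vertex set $V$ and a weight function $w$ assigning a nonnegative real number to each unordered pair of distinct vertices. The edge set is $E=\{e : w(e)>0\}$, $m=|E|$. For $\emptyset \ne X \subsetneq V$, $\Delta(X)$ denotes the set of edges of $E$ with exactly one endpoint in $X$ (a cut), with weight $w(\Delta(X))=\sum_{e\in\Delta(X)}w(e)$. $\mathcal{M}(G)$ is the set of cuts of minimum weight. For $S\subseteq E$, $\chi(S)\in\{0,1\}^m$ is its characteristic vector indexed by $E$. The cut dimension is $\mathrm{cdim}(G)=\dim\,\mathrm{span}\{\chi(S): S\in\mathcal{M}(G)\}$. *)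

theory Defs
  imports "HOL-Analysis.Analysis" "HOL-Library.Function_Algebras"
begin

text \<open>A weighted undirected graph on vertex set V: the weight function w assigns a real
  number to each unordered pair of distinct vertices, represented as the two-element set.\<close>

definition edges :: "'a set \<Rightarrow> ('a set \<Rightarrow> real) \<Rightarrow> 'a set set" where
  "edges V w = {e. \<exists>u v. u \<in> V \<and> v \<in> V \<and> u \<noteq> v \<and> e = {u, v} \<and> w e > 0}"

definition cut :: "'a set \<Rightarrow> ('a set \<Rightarrow> real) \<Rightarrow> 'a set \<Rightarrow> 'a set set" where
  "cut V w X = {e \<in> edges V w. card (e \<inter> X) = 1}"

definition cut_weight :: "'a set \<Rightarrow> ('a set \<Rightarrow> real) \<Rightarrow> 'a set \<Rightarrow> real" where
  "cut_weight V w X = (\<Sum>e\<in>cut V w X. w e)"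

definition proper_cut_side :: "'a set \<Rightarrow> 'a set \<Rightarrow> bool" where
  "proper_cut_side V X \<longleftrightarrow> X \<noteq> {} \<and> X \<subset> V"

definition min_cuts :: "'a set \<Rightarrow> ('a set \<Rightarrow> real) \<Rightarrow> 'a set set set" where
  "min_cuts V w = {cut V w X | X. proper_cut_side V X \<and>
      (\<forall>Y. proper_cut_side V Y \<longrightarrow> cut_weight V w X \<le> cut_weight V w Y)}"

text \<open>Characteristic vector of an edge set S, as a real-valued function on edges
  (vectors indexed by E; S is always a subset of E, so it vanishes outside E).\<close>
definition charvec :: "'a set set \<Rightarrow> ('a set \<Rightarrow> real)" where
  "charvec S = (\<lambda>e. if e \<in> S then 1 else 0)"

definition fun_dim :: "('b \<Rightarrow> real) set \<Rightarrow> nat" where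
  "fun_dim B = vector_space.dim (\<lambda>c f x. c * f x) B"

definition cdim :: "'a set \<Rightarrow> ('a set \<Rightarrow> real) \<Rightarrow> nat" where
  "cdim V w = fun_dim (charvec ` min_cuts V w)"

definition weight_fun :: "'a set \<Rightarrow> ('a set \<Rightarrow> real) \<Rightarrow> bool" where
  "weight_fun V w \<longleftrightarrow> (\<forall>u\<in>V. \<forall>v\<in>V. u \<noteq> v \<longrightarrow> w {u, v} \<ge> 0)"

end

theory Submission
  imports Defs
begin

text \<open>On the vertices \<open>0, \<dots>, n - 1\<close> take the graph in which \<open>0\<close> and \<open>n - 1\<close> are joined to all other
  vertices with weight \<open>1\<close>, except that \<open>{0, 1}\<close> and \<open>{n - 2, n - 1}\<close> get weight \<open>d = n - 2\<close>, and
  the inner vertices \<open>1, \<dots>, n - 2\<close> form a path with edge weights \<open>d - 1\<close>. Every vertex then has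
  weighted degree \<open>2 d\<close>, and every inner vertex sends weight exactly \<open>d\<close> to smaller vertices.
  Hence \<open>w(\<Delta>(X))\<close> is \<open>2 d |X|\<close> minus twice the sum over \<open>u \<in> X\<close> of the weight \<open>b\<^sub>X(u)\<close> from \<open>u\<close> to
  smaller vertices of \<open>X\<close>. For a side \<open>X\<close> avoiding \<open>n - 1\<close> this gives \<open>w(\<Delta>(X)) \<ge> 2 d\<close>, with
  equality only if every non-minimal \<open>u \<in> X\<close> has all its smaller neighbours in \<open>X\<close>; so the
  minimum cuts are the \<open>n\<close> vertex stars and the \<open>n - 3\<close> prefix cuts \<open>\<Delta>({0..j})\<close>, \<open>1 \<le> j < n - 2\<close>.

  Conversely \<open>\<chi>(\<Delta>(X)) + \<chi>(\<Delta>({v})) - \<chi>(\<Delta>(X \<union> {v})) = 2 \<chi>(E(v, X))\<close>, so consecutive prefix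
  cuts put the edge sets from \<open>j\<close> to \<open>{0..<j}\<close> and from \<open>k\<close> to \<open>{k<..<n}\<close> into the span. These
  \<open>2 (n - 2)\<close> vectors, together with \<open>\<chi>(\<Delta>({0}))\<close> minus the former ones, each have a private
  coordinate (the edges \<open>{0, j}\<close>, \<open>{k, n - 1}\<close> and \<open>{0, n - 1}\<close>), hence are independent.
  For \<open>n = 2\<close> a single edge does it.\<close>

lemma sum_apply: "(\<Sum>x\<in>A. f x) y = (\<Sum>x\<in>A. f x y)"
  by (induction A rule: infinite_finite_induct) auto

lemma down_closed_eq_atLeastAtMost:
  fixes X :: "nat set"
  assumes "finite X" "0 \<in> X" and down: "\<And>u. u \<in> X \<Longrightarrow> 0 < u \<Longrightarrow> u - 1 \<in> X"
  shows "X = {0..Max X}"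
proof
  show "X \<subseteq> {0..Max X}"
    using assms(1) by auto
  have "j \<in> X" if "k \<in> X" "j \<le> k" for j k
    using that
  proof (induction k)
    case 0
    then show ?case using assms(2) by simp
  next
    case (Suc k)
    then show ?case using down[of "Suc k"] by (auto simp: le_Suc_eq)
  qed
  moreover have "Max X \<in> X"
    using assms(1,2) Max_in by blast
  ultimately show "{0..Max X} \<subseteq> X"
    by auto
qed

lemma sum_distinct_pairs_eq_twice_lower:
  fixes X :: "'a::linorder set" and w :: "'a set \<Rightarrow> 'b::comm_semiring_1"
  assumes "finite X"
  shows "(\<Sum>u\<in>X. \<Sum>v\<in>X - {u}. w {u, v}) = 2 * (\<Sum>u\<in>X. \<Sum>v\<in>{v \<in> X. v < u}. w {u, v})"
proof -
  have "(\<Sum>u\<in>X. \<Sum>v\<in>X - {u}. w {u, v})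
      = (\<Sum>u\<in>X. \<Sum>v\<in>{v \<in> X. v < u}. w {u, v}) + (\<Sum>u\<in>X. \<Sum>v\<in>{v \<in> X. u < v}. w {u, v})"
  proof (subst sum.distrib[symmetric], rule sum.cong[OF refl])
    fix u
    have "X - {u} = {v \<in> X. v < u} \<union> {v \<in> X. u < v}"
      by auto
    moreover have "(\<Sum>v\<in>{v \<in> X. v < u} \<union> {v \<in> X. u < v}. w {u, v})
        = (\<Sum>v\<in>{v \<in> X. v < u}. w {u, v}) + (\<Sum>v\<in>{v \<in> X. u < v}. w {u, v})"
      using assms by (intro sum.union_disjoint) auto
    ultimately show "(\<Sum>v\<in>X - {u}. w {u, v})
        = (\<Sum>v\<in>{v \<in> X. v < u}. w {u, v}) + (\<Sum>v\<in>{v \<in> X. u < v}. w {u, v})"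
      by simp
  qed
  also have "(\<Sum>u\<in>X. \<Sum>v\<in>{v \<in> X. u < v}. w {u, v}) = (\<Sum>v\<in>X. \<Sum>u\<in>{u \<in> X. u < v}. w {u, v})"
    by (rule sum.swap_restrict[OF assms assms])
  finally show ?thesis
    by (simp add: mult_2 insert_commute)
qed

interpretation fun_space: vector_space "(\<lambda>c f x. c * f x) :: real \<Rightarrow> ('a \<Rightarrow> real) \<Rightarrow> ('a \<Rightarrow> real)"
  by unfold_locales (auto simp: fun_eq_iff algebra_simps)

lemma diagonal_family_independent:
  fixes g :: "'i \<Rightarrow> 'a \<Rightarrow> real"
  assumes "finite I"
    and diag: "\<And>i. i \<in> I \<Longrightarrow> g i (p i) \<noteq> 0"
    and off_diag: "\<And>i j. i \<in> I \<Longrightarrow> j \<in> I \<Longrightarrow> j \<noteq> i \<Longrightarrow> g j (p i) = 0"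
  shows "card (g ` I) = card I" and "fun_space.independent (g ` I)"
proof -
  have "inj_on g I"
    by (rule inj_onI) (metis diag off_diag)
  then show "card (g ` I) = card I"
    by (rule card_image)
  show "fun_space.independent (g ` I)"
  proof (rule fun_space.independent_if_scalars_zero)
    show "finite (g ` I)"
      using \<open>finite I\<close> by simp
    fix c :: "('a \<Rightarrow> real) \<Rightarrow> real" and x
    assume combination: "(\<Sum>y\<in>g ` I. (\<lambda>c f x. c * f x) (c y) y) = 0" and "x \<in> g ` I"
    then obtain i where i: "i \<in> I" "x = g i" by auto
    have "0 = (\<Sum>y\<in>g ` I. c y * y (p i))"
      using fun_cong[OF combination, of "p i"] by (simp add: sum_apply)
    also have "\<dots> = c (g i) * g i (p i) + (\<Sum>y\<in>g ` I - {g i}. c y * y (p i))"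
      using \<open>finite I\<close> i by (simp add: sum.remove[of "g ` I" "g i"])
    also have "(\<Sum>y\<in>g ` I - {g i}. c y * y (p i)) = 0"
      by (rule sum.neutral) (use off_diag i in auto)
    finally show "c x = 0"
      using diag[OF i(1)] i by simp
  qed
qed

lemma cdim_eqI:
  assumes "finite F" "min_cuts V w \<subseteq> F" "card F \<le> k"
    and "B \<subseteq> fun_space.span (charvec ` min_cuts V w)" "fun_space.independent B" "card B = k"
  shows "cdim V w = k"
proof -
  let ?S = "charvec ` min_cuts V w"
  have "finite ?S"
    using assms(1,2) finite_subset by blast
  have "fun_space.dim ?S \<le> card ?S"
    using \<open>finite ?S\<close> by (rule fun_space.dim_le_card')
  also have "\<dots> \<le> card (min_cuts V w)"
    using assms(1,2) finite_subset card_image_le by blast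
  also have "\<dots> \<le> k"
    using assms(1-3) card_mono order_trans by blast
  finally have upper: "fun_space.dim ?S \<le> k" .
  obtain A where A: "A \<subseteq> ?S" "fun_space.independent A" "?S \<subseteq> fun_space.span A"
    "card A = fun_space.dim ?S"
    by (rule fun_space.basis_exists)
  have "fun_space.span ?S \<subseteq> fun_space.span A"
    using A(3) fun_space.span_minimal fun_space.subspace_span by blast
  moreover have "finite A"
    using A(1) \<open>finite ?S\<close> finite_subset by blast
  ultimately have "k \<le> fun_space.dim ?S"
    using fun_space.independent_span_bound[of A B] A(4) assms(4-6) by auto
  with upper show ?thesis
    by (simp add: cdim_def fun_dim_def)
qed

lemma card_doubleton_inter_eq_1:
  assumes "a \<noteq> b"
  shows "card ({a, b} \<inter> X) = 1 \<longleftrightarrow> (a \<in> X) \<noteq> (b \<in> X)"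
  using assms by (cases "a \<in> X"; cases "b \<in> X") (auto simp: Int_insert_left)

lemma edges_memE:
  assumes "e \<in> edges V w"
  obtains a b where "a \<in> V" "b \<in> V" "a \<noteq> b" "e = {a, b}" "0 < w e"
  using assms unfolding edges_def by auto

lemma doubleton_in_edges_iff:
  assumes "a \<in> V" "b \<in> V" "a \<noteq> b"
  shows "{a, b} \<in> edges V w \<longleftrightarrow> 0 < w {a, b}"
  using assms unfolding edges_def by auto

lemma charvec_cut_doubleton:
  assumes "a \<in> V" "b \<in> V" "a \<noteq> b"
  shows "charvec (cut V w X) {a, b} = (if 0 < w {a, b} \<and> (a \<in> X) \<noteq> (b \<in> X) then 1 else 0)"
  using assms card_doubleton_inter_eq_1[of a b X]
  by (simp add: charvec_def cut_def doubleton_in_edges_iff)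

lemma cut_Diff:
  assumes "X \<subseteq> V"
  shows "cut V w (V - X) = cut V w X"
proof -
  have "card (e \<inter> (V - X)) = 1 \<longleftrightarrow> card (e \<inter> X) = 1" if e: "e \<in> edges V w" for e
  proof -
    obtain a b where "a \<in> V" "b \<in> V" "a \<noteq> b" "e = {a, b}"
      using e by (blast elim: edges_memE)
    with assms card_doubleton_inter_eq_1[of a b X] card_doubleton_inter_eq_1[of a b "V - X"]
    show ?thesis
      by blast
  qed
  then show ?thesis
    unfolding cut_def by blast
qed

lemma proper_cut_sideI:
  "X \<subseteq> V \<Longrightarrow> X \<noteq> {} \<Longrightarrow> y \<in> V \<Longrightarrow> y \<notin> X \<Longrightarrow> proper_cut_side V X"
  unfolding proper_cut_side_def by blast

lemma bij_betw_crossing_pairs_cut: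
  assumes "X \<subseteq> V"
  shows "bij_betw (\<lambda>p. {fst p, snd p}) {p \<in> X \<times> (V - X). 0 < w {fst p, snd p}} (cut V w X)"
proof -
  let ?Q = "{p \<in> X \<times> (V - X). 0 < w {fst p, snd p}}"
  show ?thesis
  proof (rule bij_betwI')
    fix p q assume "p \<in> ?Q" "q \<in> ?Q"
    then show "({fst p, snd p} = {fst q, snd q}) = (p = q)"
      by (cases p, cases q) (auto simp: doubleton_eq_iff)
  next
    fix p assume "p \<in> ?Q"
    then obtain u v where "p = (u, v)" "u \<in> X" "v \<in> V" "v \<notin> X" "0 < w {u, v}"
      by auto
    moreover from this have "u \<in> V" "u \<noteq> v"
      using assms by auto
    ultimately show "{fst p, snd p} \<in> cut V w X"
      by (auto simp: cut_def doubleton_in_edges_iff card_doubleton_inter_eq_1)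
  next
    fix e assume "e \<in> cut V w X"
    then obtain a b where ab: "a \<in> V" "b \<in> V" "a \<noteq> b" "e = {a, b}" "0 < w e"
      and "card (e \<inter> X) = 1"
      unfolding cut_def by (blast elim: edges_memE)
    then have "(a \<in> X) \<noteq> (b \<in> X)"
      using card_doubleton_inter_eq_1[OF ab(3)] by simp
    then consider "a \<in> X" "b \<in> V - X" | "b \<in> X" "a \<in> V - X"
      using ab(1,2) by blast
    then show "\<exists>p\<in>?Q. e = {fst p, snd p}"
    proof cases
      case 1
      with ab show ?thesis by (intro bexI[of _ "(a, b)"]) auto
    next
      case 2
      with ab show ?thesis by (intro bexI[of _ "(b, a)"]) (auto simp: insert_commute)
    qed
  qed
qed

lemma cut_weight_eq_double_sum:
  assumes "weight_fun V w" "finite V" "X \<subseteq> V"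
  shows "cut_weight V w X = (\<Sum>u\<in>X. \<Sum>v\<in>V - X. w {u, v})"
proof -
  let ?P = "X \<times> (V - X)"
  have "finite ?P"
    using assms(2,3) finite_subset by blast
  have "(\<Sum>u\<in>X. \<Sum>v\<in>V - X. w {u, v}) = (\<Sum>p\<in>?P. w {fst p, snd p})"
    by (simp add: sum.cartesian_product case_prod_beta)
  also have "\<dots> = (\<Sum>p\<in>{p \<in> ?P. 0 < w {fst p, snd p}}. w {fst p, snd p})"
  proof (rule sum.mono_neutral_right[OF \<open>finite ?P\<close>])
    show "\<forall>p\<in>?P - {p \<in> ?P. 0 < w {fst p, snd p}}. w {fst p, snd p} = 0"
      using assms(1,3) unfolding weight_fun_def by (force simp: not_less)
  qed auto
  also have "\<dots> = (\<Sum>e\<in>cut V w X. w e)"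
    by (rule sum.reindex_bij_betw[OF bij_betw_crossing_pairs_cut[OF assms(3)]])
  finally show ?thesis
    by (simp add: cut_weight_def)
qed

definition edges_to :: "'a set \<Rightarrow> ('a set \<Rightarrow> real) \<Rightarrow> 'a \<Rightarrow> 'a set \<Rightarrow> 'a set set" where
  "edges_to V w v X = {e \<in> edges V w. \<exists>x\<in>X. e = {v, x}}"

lemma charvec_edges_to_doubleton:
  assumes "a \<in> V" "b \<in> V" "a \<noteq> b"
  shows "charvec (edges_to V w v X) {a, b} =
    (if 0 < w {a, b} \<and> (a = v \<and> b \<in> X \<or> b = v \<and> a \<in> X) then 1 else 0)"
  using assms by (auto simp: charvec_def edges_to_def doubleton_in_edges_iff doubleton_eq_iff)

lemma charvec_cut_insert:
  assumes "X \<subseteq> V" "v \<in> V" "v \<notin> X"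
  shows "charvec (cut V w X) + charvec (cut V w {v}) - charvec (cut V w (insert v X))
       = (\<lambda>e. 2 * charvec (edges_to V w v X) e)"
proof
  fix e
  show "(charvec (cut V w X) + charvec (cut V w {v}) - charvec (cut V w (insert v X))) e
       = 2 * charvec (edges_to V w v X) e"
  proof (cases "e \<in> edges V w")
    case False
    then show ?thesis
      by (simp add: charvec_def cut_def edges_to_def)
  next
    case True
    then obtain a b where ab: "a \<in> V" "b \<in> V" "a \<noteq> b" "e = {a, b}" "0 < w e"
      by (blast elim: edges_memE)
    have "0 < w {a, b}"
      using ab by simp
    with ab(1-3) assms(2,3) show ?thesis
      unfolding ab(4) fun_diff_def plus_fun_apply
      by (cases "a \<in> X"; cases "b \<in> X"; cases "a = v"; cases "b = v")
        (simp_all add: charvec_cut_doubleton charvec_edges_to_doubleton)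
  qed
qed

lemma charvec_edges_to_in_span:
  assumes "X \<subseteq> V" "v \<in> V" "v \<notin> X"
    and "charvec (cut V w X) \<in> fun_space.span S" "charvec (cut V w {v}) \<in> fun_space.span S"
      "charvec (cut V w (insert v X)) \<in> fun_space.span S"
  shows "charvec (edges_to V w v X) \<in> fun_space.span S"
proof -
  let ?L = "charvec (cut V w X) + charvec (cut V w {v}) - charvec (cut V w (insert v X))"
  have "?L \<in> fun_space.span S"
    using assms(4-6) by (intro fun_space.span_diff fun_space.span_add)
  moreover have "charvec (edges_to V w v X) = (\<lambda>c f x. c * f x) (1 / 2) ?L"
    using charvec_cut_insert[OF assms(1-3)] by (simp add: fun_eq_iff)
  ultimately show ?thesis
    by (simp only: fun_space.span_scale)
qed

lemma cdim_doubleton: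
  assumes "a \<noteq> b" "0 < w {a, b}"
  shows "cdim {a, b} w = 1"
proof -
  let ?V = "{a, b}"
  have same_cut: "cut ?V w X = cut ?V w {a}" if "proper_cut_side ?V X" for X
  proof -
    have "X = {a} \<or> X = ?V - {a}"
    proof (cases "a \<in> X")
      case True
      then show ?thesis
        using that unfolding proper_cut_side_def by blast
    next
      case False
      then show ?thesis
        using that assms(1) unfolding proper_cut_side_def by blast
    qed
    then show ?thesis
      using cut_Diff[of "{a}" ?V w] by auto
  qed
  have "proper_cut_side ?V {a}"
    using assms(1) by (intro proper_cut_sideI[where y = b]) auto
  moreover have "cut_weight ?V w {a} \<le> cut_weight ?V w Y" if "proper_cut_side ?V Y" for Y
    using same_cut[OF that] by (simp add: cut_weight_def)
  ultimately have "cut ?V w {a} \<in> min_cuts ?V w"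
    unfolding min_cuts_def by blast
  moreover have "min_cuts ?V w \<subseteq> {cut ?V w {a}}"
    unfolding min_cuts_def using same_cut by blast
  ultimately have min_cuts: "min_cuts ?V w = {cut ?V w {a}}"
    by blast
  have "charvec (cut ?V w {a}) {a, b} = 1"
    using assms by (simp add: charvec_cut_doubleton)
  then have "fun_space.independent {charvec (cut ?V w {a})}"
    by (auto simp: fun_eq_iff intro!: exI[of _ "{a, b}"])
  then show ?thesis
    by (intro cdim_eqI[where F = "{cut ?V w {a}}" and B = "{charvec (cut ?V w {a})}"])
      (auto simp: min_cuts fun_space.span_base)
qed

locale extremal_graph =
  fixes n :: nat
  assumes n_ge_3: "3 \<le> n"
begin

definition d :: real where
  "d = real n - 2"

definition pair_weight :: "nat \<Rightarrow> nat \<Rightarrow> real" where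
  "pair_weight i j =
     (if j = n - 1 then (if i = n - 2 then d else 1)
      else if i = 0 then (if j = 1 then d else 1)
      else if j = Suc i then d - 1 else 0)"

definition weight :: "nat set \<Rightarrow> real" where
  "weight e = (if card e = 2 then pair_weight (Min e) (Max e) else 0)"

abbreviation V :: "nat set" where
  "V \<equiv> {0..<n}"

lemma d_ge_1: "1 \<le> d"
  using n_ge_3 by (simp add: d_def)

lemma weight_doubleton: "u \<noteq> v \<Longrightarrow> weight {u, v} = pair_weight (min u v) (max u v)"
  by (simp add: weight_def)

lemma weight_nonneg: "0 \<le> weight e"
  using d_ge_1 by (simp add: weight_def pair_weight_def)

lemma weight_fun: "weight_fun V weight"
  unfolding weight_fun_def using weight_nonneg by blast

lemma weight_first_pos: "1 \<le> j \<Longrightarrow> j < n \<Longrightarrow> 0 < weight {0, j}"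
  using d_ge_1 by (simp add: weight_doubleton pair_weight_def)

lemma weight_last_pos: "k < n - 1 \<Longrightarrow> 0 < weight {k, n - 1}"
  using d_ge_1 by (simp add: weight_doubleton pair_weight_def)

lemma back_sum_inner:
  assumes "1 \<le> u" "u \<le> n - 2"
  shows "(\<Sum>v<u. pair_weight v u) = d"
proof -
  let ?first = "if u = 1 then d else 1" and ?pred = "if 2 \<le> u then d - 1 else 0"
  have "(\<Sum>v<u. pair_weight v u)
      = (\<Sum>v<u. (if v = 0 then ?first else 0) + (if v = u - 1 then ?pred else 0))"
    by (rule sum.cong) (use assms n_ge_3 in \<open>auto simp: pair_weight_def\<close>)
  also have "\<dots> = ?first + ?pred"
    using assms by (simp add: sum.distrib)
  also have "\<dots> = d"
    using assms by auto
  finally show ?thesis .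
qed

lemma back_sum_last: "(\<Sum>v<n - 1. pair_weight v (n - 1)) = 2 * d"
proof -
  have "(\<Sum>v<n - 1. pair_weight v (n - 1)) = (\<Sum>v<n - 1. 1 + (if v = n - 2 then d - 1 else 0))"
    by (rule sum.cong) (use n_ge_3 in \<open>auto simp: pair_weight_def\<close>)
  also have "\<dots> = 2 * d"
    using n_ge_3 by (simp add: sum.distrib d_def) arith
  finally show ?thesis .
qed

lemma forward_sum_first: "(\<Sum>v\<in>{0<..<n}. pair_weight 0 v) = 2 * d"
proof -
  have "(\<Sum>v\<in>{0<..<n}. pair_weight 0 v) = (\<Sum>v\<in>{0<..<n}. 1 + (if v = 1 then d - 1 else 0))"
    by (rule sum.cong) (use n_ge_3 in \<open>auto simp: pair_weight_def\<close>)
  also have "\<dots> = 2 * d"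
    using n_ge_3 by (simp add: sum.distrib d_def)
  finally show ?thesis .
qed

lemma forward_sum_inner:
  assumes "1 \<le> u" "u \<le> n - 2"
  shows "(\<Sum>v\<in>{u<..<n}. pair_weight u v) = d"
proof -
  let ?last = "if u = n - 2 then d else 1" and ?succ = "if u \<le> n - 3 then d - 1 else 0"
  have "(\<Sum>v\<in>{u<..<n}. pair_weight u v)
      = (\<Sum>v\<in>{u<..<n}. (if v = n - 1 then ?last else 0) + (if v = Suc u then ?succ else 0))"
    by (rule sum.cong) (use assms n_ge_3 in \<open>auto simp: pair_weight_def\<close>)
  also have "\<dots> = ?last + ?succ"
    using assms n_ge_3 by (simp add: sum.distrib) presburger
  also have "\<dots> = d"
    using assms n_ge_3 by auto
  finally show ?thesis .
qed

lemma back_degree: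
  assumes "1 \<le> u" "u \<le> n - 2"
  shows "(\<Sum>v<u. weight {u, v}) = d"
proof -
  have "(\<Sum>v<u. weight {u, v}) = (\<Sum>v<u. pair_weight v u)"
    by (rule sum.cong) (auto simp: weight_doubleton)
  then show ?thesis
    using back_sum_inner[OF assms] by simp
qed

lemma degree:
  assumes "u < n"
  shows "(\<Sum>v\<in>V - {u}. weight {u, v}) = 2 * d"
proof -
  have split: "V - {u} = {..<u} \<union> {u<..<n}"
    using assms by auto
  have "(\<Sum>v\<in>V - {u}. weight {u, v}) = (\<Sum>v<u. weight {u, v}) + (\<Sum>v\<in>{u<..<n}. weight {u, v})"
    unfolding split by (rule sum.union_disjoint) auto
  also have "(\<Sum>v<u. weight {u, v}) = (\<Sum>v<u. pair_weight v u)"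
    by (rule sum.cong) (auto simp: weight_doubleton)
  also have "(\<Sum>v\<in>{u<..<n}. weight {u, v}) = (\<Sum>v\<in>{u<..<n}. pair_weight u v)"
    by (rule sum.cong) (auto simp: weight_doubleton)
  finally have "(\<Sum>v\<in>V - {u}. weight {u, v})
      = (\<Sum>v<u. pair_weight v u) + (\<Sum>v\<in>{u<..<n}. pair_weight u v)" .
  moreover consider "u = 0" | "1 \<le> u" "u \<le> n - 2" | "u = n - 1"
    using assms by linarith
  then have "(\<Sum>v<u. pair_weight v u) + (\<Sum>v\<in>{u<..<n}. pair_weight u v) = 2 * d"
  proof cases
    case 1
    then show ?thesis using forward_sum_first by simp
  next
    case 2
    then show ?thesis using back_sum_inner forward_sum_inner by simp
  next
    case 3
    then have "{u<..<n} = {}"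
      by auto
    with 3 show ?thesis
      using back_sum_last by simp
  qed
  ultimately show ?thesis
    by simp
qed

definition back_weight :: "nat set \<Rightarrow> nat \<Rightarrow> real" where
  "back_weight X u = (\<Sum>v\<in>{v \<in> X. v < u}. weight {u, v})"

lemma cut_weight_eq:
  assumes "X \<subseteq> V"
  shows "cut_weight V weight X = 2 * d * card X - 2 * (\<Sum>u\<in>X. back_weight X u)"
proof -
  have "finite X"
    using assms finite_subset by blast
  have "cut_weight V weight X = (\<Sum>u\<in>X. \<Sum>v\<in>V - X. weight {u, v})"
    using weight_fun assms by (simp add: cut_weight_eq_double_sum)
  also have "\<dots> = (\<Sum>u\<in>X. 2 * d - (\<Sum>v\<in>X - {u}. weight {u, v}))"
  proof (rule sum.cong[OF refl])
    fix u assume "u \<in> X"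
    then have "V - {u} = (V - X) \<union> (X - {u})"
      using assms by auto
    moreover have "(\<Sum>v\<in>(V - X) \<union> (X - {u}). weight {u, v})
        = (\<Sum>v\<in>V - X. weight {u, v}) + (\<Sum>v\<in>X - {u}. weight {u, v})"
      using \<open>finite X\<close> by (intro sum.union_disjoint) auto
    ultimately have "(\<Sum>v\<in>V - {u}. weight {u, v})
        = (\<Sum>v\<in>V - X. weight {u, v}) + (\<Sum>v\<in>X - {u}. weight {u, v})"
      by simp
    with \<open>u \<in> X\<close> show "(\<Sum>v\<in>V - X. weight {u, v}) = 2 * d - (\<Sum>v\<in>X - {u}. weight {u, v})"
      using degree[of u] assms by auto
  qed
  also have "\<dots> = 2 * d * card X - 2 * (\<Sum>u\<in>X. back_weight X u)"
    using sum_distinct_pairs_eq_twice_lower[OF \<open>finite X\<close>, of weight]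
    by (simp add: sum_subtractf back_weight_def)
  finally show ?thesis .
qed

lemma back_weight_le:
  assumes "1 \<le> u" "u \<le> n - 2"
  shows "back_weight X u \<le> d"
proof -
  have "back_weight X u \<le> (\<Sum>v<u. weight {u, v})"
    unfolding back_weight_def by (rule sum_mono2) (auto simp: weight_nonneg)
  then show ?thesis
    using back_degree[OF assms] by simp
qed

lemma back_weight_eq_dD:
  assumes "1 \<le> u" "u \<le> n - 2" "back_weight X u = d" "v < u" "0 < weight {u, v}"
  shows "v \<in> X"
proof (rule ccontr)
  assume "v \<notin> X"
  have "(\<Sum>v<u. weight {u, v}) = (\<Sum>v\<in>{..<u} - {v \<in> X. v < u}. weight {u, v}) + back_weight X u"
    unfolding back_weight_def by (rule sum.subset_diff) auto
  then have "(\<Sum>v\<in>{..<u} - {v \<in> X. v < u}. weight {u, v}) = 0"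
    using back_degree[OF assms(1,2)] assms(3) by simp
  then have "weight {u, v} = 0"
    using \<open>v \<notin> X\<close> assms(4) weight_nonneg by (simp add: sum_nonneg_eq_0_iff)
  with assms(5) show False
    by simp
qed

lemma weight_pred_pos:
  assumes "1 \<le> u" "u \<le> n - 2"
  shows "0 < weight {u, u - 1}"
  using assms d_def d_ge_1 by (auto simp: weight_doubleton pair_weight_def)

lemma non_minimal_inner:
  assumes "X \<subseteq> {0..<n - 1}" "u \<in> X - {Min X}"
  shows "1 \<le> u" "u \<le> n - 2"
proof -
  have "finite X"
    using assms(1) finite_subset by blast
  then have "Min X < u"
    using assms(2) Min_le[of X u] by (simp add: order.not_eq_order_implies_strict)
  with assms show "1 \<le> u" "u \<le> n - 2"
    by auto
qed

lemma cut_weight_avoiding_last: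
  assumes "X \<subseteq> {0..<n - 1}" "X \<noteq> {}"
  shows "2 * d \<le> cut_weight V weight X"
    and "cut_weight V weight X = 2 * d \<Longrightarrow> u \<in> X - {Min X} \<Longrightarrow> back_weight X u = d"
proof -
  have "finite X" "X \<subseteq> V"
    using assms(1) finite_subset by auto
  let ?m = "Min X"
  have "?m \<in> X"
    using \<open>finite X\<close> assms(2) by simp
  have "{v \<in> X. v < ?m} = {}"
    using Min_le[OF \<open>finite X\<close>] by force
  then have "back_weight X ?m = 0"
    unfolding back_weight_def by (metis sum.empty)
  then have "(\<Sum>u\<in>X. back_weight X u) = (\<Sum>u\<in>X - {?m}. back_weight X u)"
    using sum.remove[OF \<open>finite X\<close> \<open>?m \<in> X\<close>, of "back_weight X"] by simp
  moreover have "real (card X) = real (card (X - {?m})) + 1"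
    using card.remove[OF \<open>finite X\<close> \<open>?m \<in> X\<close>] by simp
  ultimately have excess: "cut_weight V weight X = 2 * d + 2 * (\<Sum>u\<in>X - {?m}. d - back_weight X u)"
    using cut_weight_eq[OF \<open>X \<subseteq> V\<close>] by (simp add: sum_subtractf algebra_simps)
  have excess_nonneg: "0 \<le> d - back_weight X u" if "u \<in> X - {?m}" for u
    using back_weight_le[of u X] non_minimal_inner[OF assms(1) that] by simp
  then have "0 \<le> (\<Sum>u\<in>X - {?m}. d - back_weight X u)"
    by (rule sum_nonneg)
  with excess show "2 * d \<le> cut_weight V weight X"
    by simp
  assume "cut_weight V weight X = 2 * d" "u \<in> X - {?m}"
  with excess have "(\<Sum>u\<in>X - {?m}. d - back_weight X u) = 0"
    by simp
  then have "\<forall>u\<in>X - {?m}. d - back_weight X u = 0"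
    using sum_nonneg_eq_0_iff[of "X - {?m}" "\<lambda>u. d - back_weight X u"] excess_nonneg \<open>finite X\<close>
    by auto
  with \<open>u \<in> X - {?m}\<close> show "back_weight X u = d"
    by simp
qed

lemma tight_side_cases:
  assumes "X \<subseteq> {0..<n - 1}" "X \<noteq> {}" "cut_weight V weight X = 2 * d"
  obtains v where "X = {v}" | M where "1 \<le> M" "M \<le> n - 2" "X = {0..M}"
proof (cases "X - {Min X} = {}")
  case True
  then have "X = {Min X}"
    using assms(2) by auto
  then show ?thesis
    by (rule that(1))
next
  case False
  have "finite X"
    using assms(1) finite_subset by blast
  have full: "back_weight X u = d" if "u \<in> X - {Min X}" for u
    using cut_weight_avoiding_last(2)[OF assms] that .
  obtain u where u: "u \<in> X - {Min X}"
    using False by blast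
  have "1 \<le> u" "u \<le> n - 2"
    using non_minimal_inner[OF assms(1) u] .
  then have "0 \<in> X"
    using back_weight_eq_dD[OF _ _ full[OF u], of 0] weight_first_pos[of u] n_ge_3
    by (simp add: insert_commute)
  then have "Min X = 0"
    using \<open>finite X\<close> by (simp add: Min_eqI)
  have "v - 1 \<in> X" if "v \<in> X" "0 < v" for v
    using back_weight_eq_dD[OF _ _ full, of v "v - 1"] non_minimal_inner[OF assms(1), of v]
      weight_pred_pos[of v] that \<open>Min X = 0\<close> by auto
  then have "X = {0..Max X}"
    using down_closed_eq_atLeastAtMost \<open>finite X\<close> \<open>0 \<in> X\<close> by blast
  moreover have "1 \<le> Max X" "Max X \<le> n - 2"
    using u \<open>Min X = 0\<close> Max_ge[OF \<open>finite X\<close>, of u] Max_in[OF \<open>finite X\<close>]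
      assms(1,2) by auto
  ultimately show ?thesis
    using that(2) by blast
qed

lemma side_avoiding_last:
  assumes "proper_cut_side V X"
  obtains Y where "Y \<subseteq> {0..<n - 1}" "Y \<noteq> {}" "cut V weight Y = cut V weight X"
proof -
  have "X \<subseteq> V" "X \<noteq> {}" "V - X \<noteq> {}"
    using assms unfolding proper_cut_side_def by auto
  have below_last: "x \<in> {0..<n - 1}" if "x \<in> V" "x \<noteq> n - 1" for x
    using that by simp
  show ?thesis
  proof (cases "n - 1 \<in> X")
    case False
    then have "X \<subseteq> {0..<n - 1}"
      using \<open>X \<subseteq> V\<close> below_last by blast
    with \<open>X \<noteq> {}\<close> show ?thesis
      using that by blast
  next
    case True
    then have "V - X \<subseteq> {0..<n - 1}"
      using below_last by blast
    moreover have "cut V weight (V - X) = cut V weight X"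
      using \<open>X \<subseteq> V\<close> by (rule cut_Diff)
    ultimately show ?thesis
      using \<open>V - X \<noteq> {}\<close> that by blast
  qed
qed

lemma cut_weight_ge:
  assumes "proper_cut_side V X"
  shows "2 * d \<le> cut_weight V weight X"
proof -
  obtain Y where "Y \<subseteq> {0..<n - 1}" "Y \<noteq> {}" "cut V weight Y = cut V weight X"
    using side_avoiding_last[OF assms] .
  then show ?thesis
    using cut_weight_avoiding_last(1)[of Y] by (simp add: cut_weight_def)
qed

lemma cut_weight_singleton:
  assumes "u < n"
  shows "cut_weight V weight {u} = 2 * d"
  using cut_weight_eq_double_sum[OF weight_fun, of "{u}"] degree[OF assms] assms by simp

lemma cut_weight_prefix:
  assumes "M \<le> n - 2"
  shows "cut_weight V weight {0..M} = 2 * d"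
proof -
  have "back_weight {0..M} u = (if u = 0 then 0 else d)" if "u \<in> {0..M}" for u
  proof -
    have "{v \<in> {0..M}. v < u} = {..<u}"
      using that by auto
    then show ?thesis
      using back_degree[of u] that assms by (simp add: back_weight_def)
  qed
  then have "(\<Sum>u\<in>{0..M}. back_weight {0..M} u) = (\<Sum>u\<in>{0..M}. d - (if u = 0 then d else 0))"
    by (intro sum.cong) auto
  also have "\<dots> = d * M"
    by (simp add: sum_subtractf algebra_simps)
  moreover have "{0..M} \<subseteq> V"
    using assms n_ge_3 by auto
  ultimately show ?thesis
    using cut_weight_eq[of "{0..M}"] by (simp add: algebra_simps)
qed

lemma cut_in_min_cuts:
  assumes "proper_cut_side V X" "cut_weight V weight X = 2 * d"
  shows "cut V weight X \<in> min_cuts V weight"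
  using assms cut_weight_ge unfolding min_cuts_def by fastforce

definition candidate_cuts :: "nat set set set" where
  "candidate_cuts = (\<lambda>v. cut V weight {v}) ` V \<union> (\<lambda>M. cut V weight {0..M}) ` {1..<n - 2}"

lemma finite_candidate_cuts: "finite candidate_cuts"
  by (simp add: candidate_cuts_def)

lemma card_candidate_cuts: "card candidate_cuts \<le> 2 * n - 3"
proof -
  have "card candidate_cuts \<le> card V + card {1..<n - 2}"
    unfolding candidate_cuts_def by (rule order_trans[OF card_Un_le add_mono[OF card_image_le card_image_le]]) auto
  then show ?thesis
    using n_ge_3 by simp
qed

lemma min_cuts_subset: "min_cuts V weight \<subseteq> candidate_cuts"
proof
  fix c assume "c \<in> min_cuts V weight"
  then obtain X where X: "c = cut V weight X" "proper_cut_side V X"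
    and minimal: "\<And>Y. proper_cut_side V Y \<Longrightarrow> cut_weight V weight X \<le> cut_weight V weight Y"
    unfolding min_cuts_def by blast
  have "proper_cut_side V {0}"
    using n_ge_3 by (intro proper_cut_sideI[where y = 1]) auto
  then have "cut_weight V weight X = 2 * d"
    using minimal cut_weight_singleton[of 0] cut_weight_ge[OF X(2)] n_ge_3 by fastforce
  obtain Y where Y: "Y \<subseteq> {0..<n - 1}" "Y \<noteq> {}" "c = cut V weight Y"
    using side_avoiding_last[OF X(2)] X(1) by metis
  with \<open>cut_weight V weight X = 2 * d\<close> X(1) have "cut_weight V weight Y = 2 * d"
    by (simp add: cut_weight_def)
  with Y(1,2) show "c \<in> candidate_cuts"
  proof (cases rule: tight_side_cases)
    case (1 v)
    then show ?thesis
      using Y unfolding candidate_cuts_def by auto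
  next
    case (2 M)
    show ?thesis
    proof (cases "M = n - 2")
      case True
      then have "{0..M} = V - {n - 1}"
        using n_ge_3 by auto
      then have "c = cut V weight {n - 1}"
        using Y(3) 2(3) cut_Diff[of "{n - 1}" V weight] n_ge_3 by auto
      then show ?thesis
        using n_ge_3 unfolding candidate_cuts_def by auto
    next
      case False
      with 2 Y(3) show ?thesis
        unfolding candidate_cuts_def by auto
    qed
  qed
qed

abbreviation span_min_cuts :: "(nat set \<Rightarrow> real) set" where
  "span_min_cuts \<equiv> fun_space.span (charvec ` min_cuts V weight)"

lemma charvec_cut_singleton_in_span:
  assumes "v < n"
  shows "charvec (cut V weight {v}) \<in> span_min_cuts"
proof -
  have "proper_cut_side V {v}"
    using assms n_ge_3 by (intro proper_cut_sideI[where y = "if v = 0 then 1 else 0"]) auto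
  then show ?thesis
    using assms cut_weight_singleton by (intro fun_space.span_base imageI cut_in_min_cuts)
qed

lemma charvec_cut_prefix_in_span:
  assumes "M \<le> n - 2"
  shows "charvec (cut V weight {0..M}) \<in> span_min_cuts"
proof -
  have "proper_cut_side V {0..M}"
    using assms n_ge_3 by (intro proper_cut_sideI[where y = "n - 1"]) auto
  then show ?thesis
    using assms cut_weight_prefix by (intro fun_space.span_base imageI cut_in_min_cuts)
qed

definition back_edges :: "nat \<Rightarrow> nat set \<Rightarrow> real" where
  "back_edges j = charvec (edges_to V weight j {0..<j})"

definition forward_edges :: "nat \<Rightarrow> nat set \<Rightarrow> real" where
  "forward_edges k = charvec (edges_to V weight k {k<..<n})"

lemma back_edges_in_span:
  assumes "1 \<le> j" "j \<le> n - 2"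
  shows "back_edges j \<in> span_min_cuts"
proof -
  have "{0..<j} = {0..j - 1}" "insert j {0..<j} = {0..j}"
    using assms by auto
  then have "charvec (cut V weight {0..<j}) \<in> span_min_cuts"
    and "charvec (cut V weight (insert j {0..<j})) \<in> span_min_cuts"
    using charvec_cut_prefix_in_span[of "j - 1"] charvec_cut_prefix_in_span[of j] assms by simp_all
  moreover have "charvec (cut V weight {j}) \<in> span_min_cuts"
    using assms n_ge_3 by (intro charvec_cut_singleton_in_span) simp
  ultimately show ?thesis
    unfolding back_edges_def using assms n_ge_3 by (intro charvec_edges_to_in_span) auto
qed

lemma forward_edges_in_span:
  assumes "1 \<le> k" "k \<le> n - 2"
  shows "forward_edges k \<in> span_min_cuts"
proof -
  have complements: "{k<..<n} = V - {0..k}" "insert k {k<..<n} = V - {0..k - 1}"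
    using assms by auto
  have prefixes: "{0..k} \<subseteq> V" "{0..k - 1} \<subseteq> V"
    using assms by auto
  have "cut V weight {k<..<n} = cut V weight {0..k}"
    unfolding complements(1) using prefixes(1) by (rule cut_Diff)
  moreover have "cut V weight (insert k {k<..<n}) = cut V weight {0..k - 1}"
    unfolding complements(2) using prefixes(2) by (rule cut_Diff)
  ultimately have "charvec (cut V weight {k<..<n}) \<in> span_min_cuts"
    and "charvec (cut V weight (insert k {k<..<n})) \<in> span_min_cuts"
    using charvec_cut_prefix_in_span[of "k - 1"] charvec_cut_prefix_in_span[of k] assms by simp_all
  moreover have "charvec (cut V weight {k}) \<in> span_min_cuts"
    using assms n_ge_3 by (intro charvec_cut_singleton_in_span) simp
  ultimately show ?thesis
    unfolding forward_edges_def using assms n_ge_3 by (intro charvec_edges_to_in_span) auto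
qed

lemma back_edges_at_first:
  assumes "1 \<le> j" "j \<le> n - 2" "1 \<le> j'" "j' < n"
  shows "back_edges j {0, j'} = (if j = j' then 1 else 0)"
  using assms weight_first_pos[of j'] by (simp add: back_edges_def charvec_edges_to_doubleton)

lemma back_edges_at_last:
  assumes "j \<le> n - 2" "k < n - 1"
  shows "back_edges j {k, n - 1} = 0"
  using assms n_ge_3 by (auto simp: back_edges_def charvec_edges_to_doubleton)

lemma forward_edges_at_first:
  assumes "1 \<le> k" "1 \<le> j" "j < n"
  shows "forward_edges k {0, j} = 0"
  using assms by (simp add: forward_edges_def charvec_edges_to_doubleton)

lemma forward_edges_at_last:
  assumes "1 \<le> k" "k \<le> n - 2" "k' < n - 1"
  shows "forward_edges k {k', n - 1} = (if k = k' then 1 else 0)"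
  using assms weight_last_pos[of k'] by (simp add: forward_edges_def charvec_edges_to_doubleton)

definition star_residual :: "nat set \<Rightarrow> real" where
  "star_residual = charvec (cut V weight {0}) - (\<Sum>j\<in>{1..n - 2}. back_edges j)"

lemma star_residual_in_span: "star_residual \<in> span_min_cuts"
  unfolding star_residual_def using n_ge_3
  by (intro fun_space.span_diff fun_space.span_sum charvec_cut_singleton_in_span back_edges_in_span) auto

lemma star_residual_apply:
  "star_residual e = charvec (cut V weight {0}) e - (\<Sum>j\<in>{1..n - 2}. back_edges j e)"
  by (simp add: star_residual_def sum_apply)

lemma star_residual_at_corner: "star_residual {0, n - 1} = 1"
proof -
  have "(\<Sum>j\<in>{1..n - 2}. back_edges j {0, n - 1}) = 0"
    using back_edges_at_last[of _ 0] n_ge_3 by simp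
  then show ?thesis
    using weight_last_pos[of 0] n_ge_3 by (simp add: star_residual_apply charvec_cut_doubleton)
qed

lemma star_residual_at_first:
  assumes "1 \<le> j" "j \<le> n - 2"
  shows "star_residual {0, j} = 0"
proof -
  have "(\<Sum>j'\<in>{1..n - 2}. back_edges j' {0, j}) = (\<Sum>j'\<in>{1..n - 2}. if j' = j then 1 else 0)"
    using assms back_edges_at_first[of _ j] by (intro sum.cong) auto
  also have "\<dots> = 1"
    using assms by simp
  finally show ?thesis
    using assms weight_first_pos[of j] by (simp add: star_residual_apply charvec_cut_doubleton)
qed

lemma star_residual_at_last:
  assumes "1 \<le> k" "k < n - 1"
  shows "star_residual {k, n - 1} = 0"
  using assms back_edges_at_last[of _ k] by (auto simp: star_residual_apply charvec_cut_doubleton)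

definition basis_vector :: "nat \<Rightarrow> nat set \<Rightarrow> real" where
  "basis_vector i =
     (if i = 0 then star_residual else if i \<le> n - 2 then back_edges i else forward_edges (i - (n - 2)))"

definition basis_edge :: "nat \<Rightarrow> nat set" where
  "basis_edge i = (if i = 0 then {0, n - 1} else if i \<le> n - 2 then {0, i} else {i - (n - 2), n - 1})"

lemma basis_vector_in_span: "i \<le> 2 * (n - 2) \<Longrightarrow> basis_vector i \<in> span_min_cuts"
  using star_residual_in_span back_edges_in_span[of i] forward_edges_in_span[of "i - (n - 2)"]
  by (simp add: basis_vector_def)

lemma basis_vector_diagonal: "i \<le> 2 * (n - 2) \<Longrightarrow> basis_vector i (basis_edge i) = 1"
  using star_residual_at_corner back_edges_at_first[of i i] forward_edges_at_last[of "i - (n - 2)" "i - (n - 2)"]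
  by (auto simp: basis_vector_def basis_edge_def)

lemma basis_vector_off_diagonal:
  assumes "i \<le> 2 * (n - 2)" "i' \<le> 2 * (n - 2)" "i' \<noteq> i"
  shows "basis_vector i' (basis_edge i) = 0"
proof -
  consider "i = 0" | "1 \<le> i" "i \<le> n - 2" | "n - 2 < i"
    by linarith
  then show ?thesis
  proof cases
    case 1
    then show ?thesis
      using assms back_edges_at_last[of i' 0] forward_edges_at_first[of "i' - (n - 2)" "n - 1"] n_ge_3
      by (auto simp: basis_vector_def basis_edge_def)
  next
    case 2
    then show ?thesis
      using assms star_residual_at_first[of i] back_edges_at_first[of i' i]
        forward_edges_at_first[of "i' - (n - 2)" i]
      by (auto simp: basis_vector_def basis_edge_def)
  next
    case 3
    then show ?thesis
      using assms star_residual_at_last[of "i - (n - 2)"] back_edges_at_last[of i' "i - (n - 2)"]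
        forward_edges_at_last[of "i' - (n - 2)" "i - (n - 2)"]
      by (auto simp: basis_vector_def basis_edge_def)
  qed
qed

theorem cdim_eq: "cdim V weight = 2 * n - 3"
proof (rule cdim_eqI[OF finite_candidate_cuts min_cuts_subset card_candidate_cuts])
  let ?I = "{..2 * (n - 2)}"
  show "basis_vector ` ?I \<subseteq> span_min_cuts"
    using basis_vector_in_span by auto
  show "fun_space.independent (basis_vector ` ?I)"
    and "card (basis_vector ` ?I) = 2 * n - 3"
    using diagonal_family_independent[of ?I basis_vector basis_edge]
      basis_vector_diagonal basis_vector_off_diagonal n_ge_3 by auto
qed

end

theorem theorem2:
  fixes n :: nat
  assumes "n \<ge> 2"
  shows "\<exists>(V :: nat set) (w :: nat set \<Rightarrow> real).
           finite V \<and> card V = n \<and> weight_fun V w \<and> cdim V w = 2 * n - 3"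
proof (cases "n = 2")
  case True
  have "cdim {0, 1 :: nat} (\<lambda>_. 1) = 1"
    by (rule cdim_doubleton) simp_all
  moreover have "weight_fun {0, 1 :: nat} (\<lambda>_. 1)"
    by (simp add: weight_fun_def)
  ultimately show ?thesis
    using True by (intro exI[of _ "{0, 1}"] exI[of _ "\<lambda>_. 1"] conjI) auto
next
  case False
  then interpret extremal_graph n
    using assms by unfold_locales simp
  show ?thesis
    using weight_fun cdim_eq by (intro exI[of _ "{0..<n}"] exI[of _ weight]) simp
qed

end
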